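(* If $T$ is a tree of order $n\ge 3$ that is not isomorphic to the path $P_4$, then $\gamma^{\rm ID}(T) \le n - \gamma(T)$.
   Context: An identifying code of a graph $G$ is a set $C\subseteq V(G)$ such that every vertex $v$ has $N[v]\cap C\neq\emptyset$ and for all distinct vertices $u,v$, $N[u]\cap C \ne N[v]\cap C$, where $N[v]$ is the closed neighborhood. $\gamma^{\rm ID}(G)$ denotes the minimum size of an identifying code, and $\gamma(G)$ the domination number. *)

theory Defs
  imports Main "HOL-Library.Extended_Nat"
begin

definition simple_graph :: "'a set \<Rightarrow> ('a \<Rightarrow> 'a \<Rightarrow> bool) \<Rightarrow> bool" where
  "simple_graph V E \<longleftrightarrow> finite V \<and>
     (\<forall>u v. E u v \<longrightarrow> u \<in> V \<and> v \<in> V \<and> u \<noteq> v \<and> E v u)"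

definition connected_graph :: "'a set \<Rightarrow> ('a \<Rightarrow> 'a \<Rightarrow> bool) \<Rightarrow> bool" where
  "connected_graph V E \<longleftrightarrow> V \<noteq> {} \<and> (\<forall>u\<in>V. \<forall>v\<in>V. E\<^sup>*\<^sup>* u v)"

definition is_cycle :: "'a set \<Rightarrow> ('a \<Rightarrow> 'a \<Rightarrow> bool) \<Rightarrow> 'a list \<Rightarrow> bool" where
  "is_cycle V E xs \<longleftrightarrow> length xs \<ge> 3 \<and> distinct xs \<and> set xs \<subseteq> V \<and>
     (\<forall>i. Suc i < length xs \<longrightarrow> E (xs ! i) (xs ! Suc i)) \<and> E (last xs) (hd xs)"

definition acyclic_graph :: "'a set \<Rightarrow> ('a \<Rightarrow> 'a \<Rightarrow> bool) \<Rightarrow> bool" where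
  "acyclic_graph V E \<longleftrightarrow> \<not> (\<exists>xs. is_cycle V E xs)"

definition is_tree :: "'a set \<Rightarrow> ('a \<Rightarrow> 'a \<Rightarrow> bool) \<Rightarrow> bool" where
  "is_tree V E \<longleftrightarrow> simple_graph V E \<and> connected_graph V E \<and> acyclic_graph V E"

definition graph_iso :: "'a set \<Rightarrow> ('a \<Rightarrow> 'a \<Rightarrow> bool) \<Rightarrow> 'b set \<Rightarrow> ('b \<Rightarrow> 'b \<Rightarrow> bool) \<Rightarrow> bool" where
  "graph_iso V E W F \<longleftrightarrow> (\<exists>f. bij_betw f V W \<and> (\<forall>u\<in>V. \<forall>v\<in>V. E u v \<longleftrightarrow> F (f u) (f v)))"

definition path_vertices :: "nat \<Rightarrow> nat set" where
  "path_vertices n = {0..<n}"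

definition path_edges :: "nat \<Rightarrow> nat \<Rightarrow> nat \<Rightarrow> bool" where
  "path_edges n i j \<longleftrightarrow> i < n \<and> j < n \<and> (Suc i = j \<or> Suc j = i)"

definition closed_nbhd :: "'a set \<Rightarrow> ('a \<Rightarrow> 'a \<Rightarrow> bool) \<Rightarrow> 'a \<Rightarrow> 'a set" where
  "closed_nbhd V E v = {u \<in> V. u = v \<or> E v u}"

definition dominating_set :: "'a set \<Rightarrow> ('a \<Rightarrow> 'a \<Rightarrow> bool) \<Rightarrow> 'a set \<Rightarrow> bool" where
  "dominating_set V E D \<longleftrightarrow> D \<subseteq> V \<and> (\<forall>v\<in>V. closed_nbhd V E v \<inter> D \<noteq> {})"

definition identifying_code :: "'a set \<Rightarrow> ('a \<Rightarrow> 'a \<Rightarrow> bool) \<Rightarrow> 'a set \<Rightarrow> bool" where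
  "identifying_code V E C \<longleftrightarrow> C \<subseteq> V \<and> (\<forall>v\<in>V. closed_nbhd V E v \<inter> C \<noteq> {}) \<and>
     (\<forall>u\<in>V. \<forall>v\<in>V. u \<noteq> v \<longrightarrow> closed_nbhd V E u \<inter> C \<noteq> closed_nbhd V E v \<inter> C)"

text \<open>Domination number (V itself is always dominating, so the minimum exists for finite V).\<close>
definition domination_number :: "'a set \<Rightarrow> ('a \<Rightarrow> 'a \<Rightarrow> bool) \<Rightarrow> nat" where
  "domination_number V E = Min (card ` {D. dominating_set V E D})"

text \<open>Identifying code number, in enat: infinity if no identifying code exists.\<close>
definition id_code_number :: "'a set \<Rightarrow> ('a \<Rightarrow> 'a \<Rightarrow> bool) \<Rightarrow> enat" where
  "id_code_number V E = (INF C \<in> {C. identifying_code V E C}. enat (card C))"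

end

theory Submission
  imports Defs
begin

text \<open>The bound is proved in the stronger form that some identifying code \<open>C\<close> and some dominating
  set \<open>D\<close> satisfy \<open>|C| + |D| \<le> n\<close>, by induction on \<open>n\<close> over all forests whose components have at
  least three vertices and are not \<open>P\<^sub>4\<close> (called admissible below). If a vertex carries two leaves,
  one of them is deleted. Otherwise a vertex of degree at most one in the forest of branch vertices
  (non-leaves with two non-leaf neighbours) exhibits one of three configurations: two pendant
  \<open>P\<^sub>2\<close> at a vertex, a pendant \<open>P\<^sub>3\<close>, or a pendant leaf next to a pendant \<open>P\<^sub>2\<close>. After deleting
  such a piece \<open>X\<close>, a code and a dominating set of the rest extend to the whole forest by adding at
  most \<open>|X|\<close> vertices. If the rest is no longer admissible, its offending component contains the
  vertex where \<open>X\<close> was attached, and together with \<open>X\<close> it forms a small component (\<open>P\<^sub>3\<close>, \<open>P\<^sub>5\<close>,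
  \<open>P\<^sub>7\<close> or a spider) whose bound is checked directly.\<close>

locale adj_graph =
  fixes E :: "'a \<Rightarrow> 'a \<Rightarrow> bool"
  assumes adj_sym: "E u v \<Longrightarrow> E v u"
    and adj_irrefl: "\<not> E u u"
begin

definition nbhd :: "'a set \<Rightarrow> 'a \<Rightarrow> 'a set" where
  "nbhd V x = {y \<in> V. E x y}"

lemma nbhd_subset: "nbhd V x \<subseteq> V"
  by (auto simp: nbhd_def)

lemma closed_nbhd_eq: "x \<in> V \<Longrightarrow> closed_nbhd V E x = insert x (nbhd V x)"
  by (auto simp: closed_nbhd_def nbhd_def)

lemma nbhd_Diff: "nbhd (V - X) x = nbhd V x - X"
  by (auto simp: nbhd_def)

lemma nbhd_neq: "y \<in> nbhd V x \<Longrightarrow> x \<noteq> y"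
  using adj_irrefl by (auto simp: nbhd_def)

lemma nbhd_sym: "y \<in> nbhd V x \<Longrightarrow> x \<in> V \<Longrightarrow> x \<in> nbhd V y"
  using adj_sym by (auto simp: nbhd_def)

lemma nbhd_eq_not_sym: "nbhd V x = S \<Longrightarrow> y \<notin> S \<Longrightarrow> y \<in> V \<Longrightarrow> x \<notin> nbhd V y"
  using nbhd_sym by blast

lemma nbhd_closed_subset: "X \<subseteq> V \<Longrightarrow> nbhd V x \<subseteq> X \<Longrightarrow> nbhd X x = nbhd V x"
  by (auto simp: nbhd_def)

lemma nbhd_eq_subset: "nbhd V x = S \<Longrightarrow> S \<subseteq> V"
  using nbhd_subset by blast

lemma nbhd_Int_attached:
  assumes "\<forall>x\<in>X. nbhd V x \<subseteq> insert s X" and "u \<in> V - X" "u \<noteq> s"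
  shows "nbhd V u \<inter> X = {}"
  using assms nbhd_sym[of _ V u] by blast

lemma nbhd_split: "nbhd V v = nbhd (V - X) v \<union> (nbhd V v \<inter> X)"
  by (auto simp: nbhd_def)

definition code_trace :: "'a set \<Rightarrow> 'a set \<Rightarrow> 'a \<Rightarrow> 'a set" where
  "code_trace V C x = closed_nbhd V E x \<inter> C"

lemma code_trace_split:
  assumes "z \<in> V - X" "A \<subseteq> X" "C' \<subseteq> V - X"
  shows "code_trace V (C' \<union> A) z = (closed_nbhd (V - X) E z \<inter> C') \<union> (nbhd V z \<inter> A)"
  using assms by (auto simp: code_trace_def closed_nbhd_def nbhd_def)

section \<open>Finite forests have vertices of degree at most one\<close>

lemma nonbacktracking_walk:
  assumes "x0 \<in> W" and branching: "\<And>w p. w \<in> W \<Longrightarrow> \<exists>y. y \<in> nbhd W w \<and> y \<noteq> p"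
  shows "\<exists>x. \<forall>n. x n \<in> W \<and> E (x n) (x (Suc n)) \<and> x (Suc (Suc n)) \<noteq> x n"
proof -
  txt \<open>The walk is built as a sequence of pairs (previous vertex, current vertex).\<close>
  have "\<exists>f. \<forall>n. snd (f n) \<in> W \<and>
      fst (f (Suc n)) = snd (f n) \<and> snd (f (Suc n)) \<in> nbhd W (snd (f n)) \<and> snd (f (Suc n)) \<noteq> fst (f n)"
  proof (rule dependent_nat_choice)
    show "\<exists>pc. snd pc \<in> W" using \<open>x0 \<in> W\<close> by auto
  next
    fix pc :: "'a \<times> 'a" and n assume "snd pc \<in> W"
    then obtain y where "y \<in> nbhd W (snd pc)" "y \<noteq> fst pc" using branching by blast
    then show "\<exists>pc'. snd pc' \<in> W \<and> fst pc' = snd pc \<and> snd pc' \<in> nbhd W (snd pc) \<and> snd pc' \<noteq> fst pc"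
      using nbhd_subset by (intro exI[of _ "(snd pc, y)"]) auto
  qed
  then obtain f where f: "\<And>n. snd (f n) \<in> W \<and> fst (f (Suc n)) = snd (f n) \<and>
      snd (f (Suc n)) \<in> nbhd W (snd (f n)) \<and> snd (f (Suc n)) \<noteq> fst (f n)" by blast
  show ?thesis
    by (rule exI[of _ "\<lambda>n. snd (f n)"]) (use f[of "Suc _"] f in \<open>auto simp: nbhd_def\<close>)
qed

lemma nonbacktracking_walk_cycle:
  assumes "finite W" and walk: "\<And>n. x n \<in> W" "\<And>n. E (x n) (x (Suc n))" "\<And>n. x (Suc (Suc n)) \<noteq> x n"
  shows "\<exists>xs. is_cycle W E xs"
proof -
  define repeats where "repeats j \<longleftrightarrow> (\<exists>i<j. x i = x j)" for j
  have "\<not> inj_on x {0..card W}"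
  proof
    assume "inj_on x {0..card W}"
    then have "card {0..card W} \<le> card W"
      by (rule card_inj_on_le) (use walk(1) \<open>finite W\<close> in auto)
    then show False by simp
  qed
  then have "\<exists>j. repeats j"
    unfolding repeats_def inj_on_def by (metis linorder_neqE_nat)
  txt \<open>The first repetition closes a cycle, of length at least three because the walk neither
    stays put nor backtracks.\<close>
  define j where "j = (LEAST j. repeats j)"
  obtain i where i: "i < j" "x i = x j"
    using LeastI_ex[OF \<open>\<exists>j. repeats j\<close>] unfolding repeats_def j_def by blast
  have "inj_on x {i..<j}"
  proof (rule inj_onI)
    fix p q assume pq: "p \<in> {i..<j}" "q \<in> {i..<j}" "x p = x q"
    have "\<not> repeats k" if "k < j" for k
      using that not_less_Least unfolding j_def by blast
    then show "p = q"
      using pq unfolding repeats_def by (metis atLeastLessThan_iff linorder_neqE_nat)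
  qed
  have "j \<noteq> Suc i" using walk(2)[of i] i adj_irrefl by auto
  moreover have "j \<noteq> Suc (Suc i)" using walk(3)[of i] i by auto
  ultimately have "j - i \<ge> 3" using i by linarith
  have "is_cycle W E (map x [i..<j])"
    unfolding is_cycle_def
  proof (intro conjI allI impI)
    show "3 \<le> length (map x [i..<j])" using \<open>j - i \<ge> 3\<close> by simp
    show "distinct (map x [i..<j])" using \<open>inj_on x {i..<j}\<close> by (simp add: distinct_map)
    show "set (map x [i..<j]) \<subseteq> W" using walk(1) by auto
    show "E (map x [i..<j] ! k) (map x [i..<j] ! Suc k)" if "Suc k < length (map x [i..<j])" for k
      using that walk(2)[of "i + k"] by simp
    have "E (x (j - 1)) (x j)" using walk(2)[of "j - 1"] i by simp
    then show "E (last (map x [i..<j])) (hd (map x [i..<j]))"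
      using i by (simp add: last_map hd_map)
  qed
  then show ?thesis by blast
qed

lemma acyclic_low_degree_vertex:
  assumes "finite W" "W \<noteq> {}" "acyclic_graph W E"
  shows "\<exists>w\<in>W. \<exists>y. nbhd W w \<subseteq> {y}"
proof (rule ccontr)
  assume "\<not> ?thesis"
  then have branching: "\<exists>y. y \<in> nbhd W w \<and> y \<noteq> p" if "w \<in> W" for w p
    using that by blast
  obtain x0 where "x0 \<in> W" using assms(2) by blast
  then obtain x where "\<And>n. x n \<in> W" "\<And>n. E (x n) (x (Suc n))" "\<And>n. x (Suc (Suc n)) \<noteq> x n"
    using nonbacktracking_walk[OF _ branching] by blast
  then show False
    using nonbacktracking_walk_cycle assms(1,3) unfolding acyclic_graph_def by blast
qed

lemma acyclic_graph_subset: "acyclic_graph V E \<Longrightarrow> W \<subseteq> V \<Longrightarrow> acyclic_graph W E"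
  unfolding acyclic_graph_def is_cycle_def by blast

section \<open>Combining identifying codes and dominating sets\<close>

definition code_dom_bound :: "'a set \<Rightarrow> bool" where
  "code_dom_bound V \<longleftrightarrow>
     (\<exists>C D. identifying_code V E C \<and> dominating_set V E D \<and> card C + card D \<le> card V)"

lemma code_dom_bound_componentI:
  assumes "X \<subseteq> V" "\<forall>x\<in>X. nbhd V x \<subseteq> X" "C \<subseteq> X" "D \<subseteq> X"
    and "\<And>x. x \<in> X \<Longrightarrow> insert x (nbhd V x) \<inter> C \<noteq> {}"
    and "inj_on (\<lambda>x. insert x (nbhd V x) \<inter> C) X"
    and "\<And>x. x \<in> X \<Longrightarrow> insert x (nbhd V x) \<inter> D \<noteq> {}"
    and "card C + card D \<le> card X"
  shows "code_dom_bound X"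
proof -
  have "closed_nbhd X E x = insert x (nbhd V x)" if "x \<in> X" for x
    using that assms(1,2) nbhd_closed_subset[of X V x] closed_nbhd_eq[of x X] by simp
  then show ?thesis
    using assms(3-) unfolding code_dom_bound_def identifying_code_def dominating_set_def inj_on_def
    by (metis (no_types, lifting))
qed

lemma closed_nbhd_disjoint_Un:
  assumes "\<And>a b. a \<in> A \<Longrightarrow> b \<in> B \<Longrightarrow> \<not> E a b" and "x \<in> A"
  shows "closed_nbhd (A \<union> B) E x = closed_nbhd A E x"
  using assms by (auto simp: closed_nbhd_def)

lemma identifying_code_disjoint_Un:
  assumes "A \<inter> B = {}" and no_edge: "\<And>a b. a \<in> A \<Longrightarrow> b \<in> B \<Longrightarrow> \<not> E a b"
    and CA: "identifying_code A E CA" and CB: "identifying_code B E CB"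
  shows "identifying_code (A \<union> B) E (CA \<union> CB)"
proof -
  have no_edge': "\<And>b a. b \<in> B \<Longrightarrow> a \<in> A \<Longrightarrow> \<not> E b a" using no_edge adj_sym by blast
  have sub: "CA \<subseteq> A" "CB \<subseteq> B" using CA CB by (auto simp: identifying_code_def)
  let ?T = "code_trace (A \<union> B) (CA \<union> CB)"
  have TA: "?T x = code_trace A CA x" if "x \<in> A" for x
    using closed_nbhd_disjoint_Un[OF no_edge that] sub assms(1) that
    unfolding code_trace_def closed_nbhd_def by blast
  have TB: "?T x = code_trace B CB x" if "x \<in> B" for x
    using closed_nbhd_disjoint_Un[OF no_edge' that] sub assms(1) that
    unfolding code_trace_def closed_nbhd_def by (auto simp: Un_commute)
  have ne: "?T x \<noteq> {}" if "x \<in> A \<union> B" for x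
    using that CA CB TA TB unfolding identifying_code_def code_trace_def by auto
  moreover have "?T x \<noteq> ?T y" if "x \<in> A \<union> B" "y \<in> A \<union> B" "x \<noteq> y" for x y
  proof (cases "x \<in> A \<longleftrightarrow> y \<in> A")
    case True
    then show ?thesis
      using that CA CB TA TB assms(1) unfolding identifying_code_def code_trace_def by auto
  next
    case False
    have "?T z \<subseteq> A" if "z \<in> A" for z using TA[OF that] sub unfolding code_trace_def by blast
    moreover have "?T z \<subseteq> B" if "z \<in> B" for z using TB[OF that] sub unfolding code_trace_def by blast
    ultimately show ?thesis
      using that False ne[of x] assms(1) by blast
  qed
  ultimately show ?thesis
    using sub unfolding identifying_code_def code_trace_def by auto
qed

lemma code_dom_bound_disjoint_Un:
  assumes "finite A" "finite B" "A \<inter> B = {}" and no_edge: "\<And>a b. a \<in> A \<Longrightarrow> b \<in> B \<Longrightarrow> \<not> E a b"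
    and "code_dom_bound A" "code_dom_bound B"
  shows "code_dom_bound (A \<union> B)"
proof -
  obtain CA DA CB DB where CA: "identifying_code A E CA" and DA: "dominating_set A E DA"
    and CB: "identifying_code B E CB" and DB: "dominating_set B E DB"
    and card: "card CA + card DA \<le> card A" "card CB + card DB \<le> card B"
    using assms(5,6) unfolding code_dom_bound_def by blast
  have no_edge': "\<And>b a. b \<in> B \<Longrightarrow> a \<in> A \<Longrightarrow> \<not> E b a" using no_edge adj_sym by blast
  have "closed_nbhd (A \<union> B) E x \<inter> (DA \<union> DB) \<noteq> {}" if "x \<in> A \<union> B" for x
  proof (cases "x \<in> A")
    case True
    then show ?thesis using DA closed_nbhd_disjoint_Un[OF no_edge True] unfolding dominating_set_def by blast
  next
    case False
    then have "x \<in> B" using that by blast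
    then show ?thesis using DB closed_nbhd_disjoint_Un[OF no_edge' \<open>x \<in> B\<close>, of A]
      unfolding dominating_set_def by (auto simp: Un_commute)
  qed
  then have "dominating_set (A \<union> B) E (DA \<union> DB)"
    using DA DB unfolding dominating_set_def by blast
  moreover have "card (CA \<union> CB) + card (DA \<union> DB) \<le> card (A \<union> B)"
    using card card_Un_le[of CA CB] card_Un_le[of DA DB] card_Un_disjoint[OF assms(1-3)] by linarith
  ultimately show ?thesis
    using identifying_code_disjoint_Un[OF assms(3) no_edge CA CB] unfolding code_dom_bound_def by blast
qed

lemma identifying_code_attach:
  assumes XV: "X \<subseteq> V" and s: "s \<in> V - X" and att: "\<forall>x\<in>X. nbhd V x \<subseteq> insert s X"
    and C': "identifying_code (V-X) E C'" and A: "A \<subseteq> X"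
    and ne: "\<forall>x\<in>X. code_trace V (C' \<union> A) x \<inter> X \<noteq> {}"
    and dist: "\<forall>x\<in>X. \<forall>u\<in>insert s X. u \<noteq> x \<longrightarrow> code_trace V (C' \<union> A) x \<noteq> code_trace V (C' \<union> A) u"
  shows "identifying_code V E (C' \<union> A)"
proof -
  let ?T = "code_trace V (C' \<union> A)"
  have C'sub: "C' \<subseteq> V - X" using C' by (simp add: identifying_code_def)
  have restr: "?T u \<inter> (V - X) = closed_nbhd (V - X) E u \<inter> C'" if "u \<in> V - X" for u
    using that C'sub A unfolding code_trace_def by (auto simp: closed_nbhd_def)
  have outside: "?T u \<inter> X = {}" if "u \<in> V - X" "u \<noteq> s" for u
    using that nbhd_Int_attached[OF att] unfolding code_trace_def by (auto simp: closed_nbhd_def nbhd_def)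
  have T_ne: "?T v \<noteq> {}" if "v \<in> V" for v
  proof (cases "v \<in> X")
    case False
    then have "closed_nbhd (V - X) E v \<inter> C' \<noteq> {}" using C' that by (simp add: identifying_code_def)
    then show ?thesis using restr[of v] that False by auto
  qed (use ne in auto)
  have T_dist: "?T u \<noteq> ?T v" if u: "u \<in> V" and v: "v \<in> V" and uv: "u \<noteq> v" for u v
  proof (cases "u \<in> X \<or> v \<in> X")
    case True
    then consider "u \<in> X" "v \<in> insert s X" | "v \<in> X" "u \<in> insert s X"
      | "u \<in> X" "v \<in> V - X" "v \<noteq> s" | "v \<in> X" "u \<in> V - X" "u \<noteq> s"
      using u v by blast
    then show ?thesis
      by cases (use dist uv ne outside in metis)+
  next
    case False
    then have "closed_nbhd (V - X) E u \<inter> C' \<noteq> closed_nbhd (V - X) E v \<inter> C'"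
      using C' u v uv by (simp add: identifying_code_def)
    then show ?thesis using restr[of u] restr[of v] u v False by auto
  qed
  show ?thesis
    using T_ne T_dist C'sub A XV unfolding identifying_code_def code_trace_def by auto
qed

lemma dominating_set_extend:
  assumes D': "dominating_set (V - X) E D'" and "B \<subseteq> V"
    and dom: "\<forall>x\<in>X. closed_nbhd V E x \<inter> (D' \<union> B) \<noteq> {}"
  shows "dominating_set V E (D' \<union> B)"
  unfolding dominating_set_def
proof (intro conjI ballI)
  show "D' \<union> B \<subseteq> V" using D' \<open>B \<subseteq> V\<close> by (auto simp: dominating_set_def)
  fix v assume v: "v \<in> V"
  show "closed_nbhd V E v \<inter> (D' \<union> B) \<noteq> {}"
  proof (cases "v \<in> X")
    case False
    then have "closed_nbhd (V - X) E v \<inter> D' \<noteq> {}" using D' v by (simp add: dominating_set_def)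
    then show ?thesis by (auto simp: closed_nbhd_def)
  qed (use dom in blast)
qed

lemma code_dom_bound_attach:
  assumes fin: "finite V" and XV: "X \<subseteq> V" and s: "s \<in> V - X"
    and att: "\<forall>x\<in>X. nbhd V x \<subseteq> insert s X"
    and C': "identifying_code (V-X) E C'" and D': "dominating_set (V-X) E D'"
    and cd: "card C' + card D' \<le> card (V - X)"
    and AB: "A \<subseteq> X" "B \<subseteq> V"
    and ne: "\<forall>x\<in>X. code_trace V (C' \<union> A) x \<inter> X \<noteq> {}"
    and dist: "\<forall>x\<in>X. \<forall>u\<in>insert s X. u \<noteq> x \<longrightarrow> code_trace V (C' \<union> A) x \<noteq> code_trace V (C' \<union> A) u"
    and dom: "\<forall>x\<in>X. closed_nbhd V E x \<inter> (D' \<union> B) \<noteq> {}"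
    and card: "card A + card B \<le> card X"
  shows "code_dom_bound V"
proof -
  have "card (C' \<union> A) + card (D' \<union> B) \<le> card V"
    using card_Un_le[of C' A] card_Un_le[of D' B] card_Diff_subset[OF finite_subset[OF XV fin] XV]
      card_mono[OF fin XV] cd card by linarith
  then show ?thesis
    using identifying_code_attach[OF XV s att C' AB(1) ne dist] dominating_set_extend[OF D' AB(2) dom]
    unfolding code_dom_bound_def by blast
qed

lemma code_dom_bound_empty: "code_dom_bound {}"
  unfolding code_dom_bound_def identifying_code_def dominating_set_def by auto

lemma support_nbr_in_code:
  assumes C: "identifying_code V E C" and v: "v \<in> V" and l: "l \<in> V"
    and nv: "nbhd V v = {l, w}" and nl: "nbhd V l = {v}"
  shows "w \<in> C"
proof (rule ccontr)
  assume "w \<notin> C"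
  have "closed_nbhd V E v \<inter> C = closed_nbhd V E l \<inter> C"
    using \<open>w \<notin> C\<close> by (auto simp: closed_nbhd_eq[OF v] closed_nbhd_eq[OF l] nv nl)
  moreover have "v \<noteq> l" using nbhd_neq nl by auto
  ultimately show False using C v l unfolding identifying_code_def by blast
qed

lemma dominating_set_with_support:
  assumes fin: "finite V" and D: "dominating_set V E D" and l: "l \<in> V" and nl: "nbhd V l = {v}"
  obtains D' where "dominating_set V E D'" "v \<in> D'" "card D' \<le> card D"
proof
  have v: "v \<in> V" using nbhd_eq_subset[OF nl] by simp
  have finD: "finite D" using D fin finite_subset unfolding dominating_set_def by blast
  have "{l, v} \<inter> D \<noteq> {}"
    using D l unfolding dominating_set_def by (metis closed_nbhd_eq nl)
  then show "card (insert v (D - {l})) \<le> card D"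
  proof (cases "v \<in> D")
    case False
    then have "l \<in> D" using \<open>{l, v} \<inter> D \<noteq> {}\<close> by blast
    then show ?thesis using finD card_gt_0_iff[of D] by (auto simp: card_insert_if)
  qed (use finD in \<open>auto intro: card_mono\<close>)
  show "dominating_set V E (insert v (D - {l}))"
    unfolding dominating_set_def
  proof (intro conjI ballI)
    show "insert v (D - {l}) \<subseteq> V" using D v unfolding dominating_set_def by blast
    fix x assume x: "x \<in> V"
    then obtain y where y: "y \<in> closed_nbhd V E x" "y \<in> D"
      using D unfolding dominating_set_def by blast
    show "closed_nbhd V E x \<inter> insert v (D - {l}) \<noteq> {}"
    proof (cases "y = l")
      case True
      then have "x = l \<or> x = v" using x y nl adj_sym by (auto simp: closed_nbhd_def nbhd_def)
      then have "v \<in> closed_nbhd V E x" using x v nl by (auto simp: closed_nbhd_eq)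
      then show ?thesis by blast
    qed (use y in blast)
  qed
qed simp

lemma identifying_code_by_markers:
  assumes C: "C \<subseteq> V" and C': "identifying_code W E C'" and SW: "V - S \<subseteq> W"
    and marked: "\<forall>x\<in>S. code_trace V C x \<inter> M \<noteq> {}"
    and unmarked: "\<forall>y\<in>V - S. code_trace V C y = code_trace W C' y \<and> code_trace V C y \<inter> M = {}"
    and dist: "\<forall>x\<in>S. \<forall>y\<in>S. x \<noteq> y \<longrightarrow> code_trace V C x \<noteq> code_trace V C y"
  shows "identifying_code V E C"
proof -
  have ne: "code_trace V C x \<noteq> {}" if "x \<in> V" for x
    using that marked unmarked C' SW unfolding identifying_code_def code_trace_def by (cases "x \<in> S") auto
  have "code_trace V C x \<noteq> code_trace V C y" if "x \<in> V" "y \<in> V" "x \<noteq> y" for x y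
  proof (cases "x \<in> S"; cases "y \<in> S")
    assume "x \<notin> S" "y \<notin> S"
    then show ?thesis
      using that unmarked C' SW unfolding identifying_code_def code_trace_def by (metis Diff_iff subsetD)
  qed (use that marked unmarked dist in blast)+
  then show ?thesis
    using ne C unfolding identifying_code_def code_trace_def by blast
qed

lemma code_dom_bound_remove_twin_leaf:
  assumes fin: "finite V" and l1V: "l1 \<in> V" and l2V: "l2 \<in> V" and l12: "l1 \<noteq> l2"
    and n1: "nbhd V l1 = {v}" and n2: "nbhd V l2 = {v}"
    and bound: "code_dom_bound (V - {l1})"
  shows "code_dom_bound V"
proof -
  obtain C' D0 where C': "identifying_code (V - {l1}) E C'" and D0: "dominating_set (V - {l1}) E D0"
    and cd0: "card C' + card D0 \<le> card (V - {l1})"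
    using bound unfolding code_dom_bound_def by blast
  have vl1: "v \<noteq> l1" and vV: "v \<in> V" using nbhd_neq[of v V l1] n1 nbhd_eq_subset[OF n1] by auto
  have l2': "l2 \<in> V - {l1}" and vV': "v \<in> V - {l1}" using l2V l12 vV vl1 by auto
  have n2': "nbhd (V - {l1}) l2 = {v}" using n2 vl1 by (simp add: nbhd_Diff)
  obtain D' where D': "dominating_set (V - {l1}) E D'" and vD': "v \<in> D'" and "card D' \<le> card D0"
    using dominating_set_with_support[OF _ D0 l2' n2'] fin by blast
  with cd0 have cd: "card C' + card D' \<le> card (V - {l1})" by linarith
  let ?T = "code_trace V (C' \<union> {l1})"
  have T_l1: "?T l1 = insert l1 ({v} \<inter> C')"
    using l1V by (auto simp: code_trace_def closed_nbhd_eq n1)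
  txt \<open>Only \<open>l\<^sub>1\<close> and \<open>v\<close> could be confused; but then \<open>l\<^sub>2\<close> and \<open>v\<close> would already be
    confused by \<open>C'\<close>.\<close>
  have "?T l1 \<noteq> ?T v"
  proof
    assume eq: "?T l1 = ?T v"
    have sub: "closed_nbhd (V - {l1}) E v \<inter> C' \<subseteq> {v}"
    proof
      fix y assume y: "y \<in> closed_nbhd (V - {l1}) E v \<inter> C'"
      then have "y \<in> ?T v" by (auto simp: code_trace_def closed_nbhd_def)
      then have "y \<in> insert l1 ({v} \<inter> C')" using eq T_l1 by simp
      moreover have "y \<noteq> l1" using y by (auto simp: closed_nbhd_def)
      ultimately show "y \<in> {v}" by auto
    qed
    have "l2 \<in> closed_nbhd (V - {l1}) E v"
      using nbhd_sym[of v "V - {l1}" l2] n2' vV' l2' by (auto simp: closed_nbhd_eq)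
    then have "l2 \<notin> C'" using sub nbhd_neq[of v V l2] n2 by auto
    then have "closed_nbhd (V - {l1}) E l2 \<inter> C' = closed_nbhd (V - {l1}) E v \<inter> C'"
      using sub vV' l2' n2' by (auto simp: closed_nbhd_eq)
    then show False
      using C' l2' vV' nbhd_neq[of v V l2] n2 unfolding identifying_code_def by auto
  qed
  then show ?thesis
    by (intro code_dom_bound_attach[where X = "{l1}" and s = v and A = "{l1}" and B = "{}",
          OF fin _ vV' _ C' D' cd])
      (use l1V n1 T_l1 vD' in \<open>auto simp: closed_nbhd_eq\<close>)
qed

lemma code_dom_bound_attach_pendant_P2:
  assumes fin: "finite V" and nv: "nbhd V v = {w,l}" and nl: "nbhd V l = {v}" and lw: "l \<noteq> w"
    and C': "identifying_code (V - {v,l}) E C'" and D': "dominating_set (V - {v,l}) E D'"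
    and cd: "card C' + card D' \<le> card (V - {v,l})" and wC: "w \<in> C'"
  shows "code_dom_bound V"
proof -
  have wV: "w \<in> V" and vV: "v \<in> V" and lV: "l \<in> V" using nv nl by (auto dest: nbhd_eq_subset)
  have vl: "v \<noteq> l" and vw: "v \<noteq> w" using nbhd_neq nl nv by blast+
  have "C' \<subseteq> V - {v,l}" using C' by (simp add: identifying_code_def)
  then have vC: "v \<notin> C'" by auto
  have "l \<notin> nbhd V w"
    using nbhd_sym[of l V w] wV nl vw by auto
  then have "code_trace V (C' \<union> {l}) l = {l}" "code_trace V (C' \<union> {l}) v = {w, l}"
    "l \<notin> code_trace V (C' \<union> {l}) w"
    using vC wC lw by (auto simp: code_trace_def closed_nbhd_eq lV vV wV nl nv)
  then show ?thesis
    by (intro code_dom_bound_attach[where X = "{v,l}" and s = w and A = "{l}" and B = "{v}",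
          OF fin _ _ _ C' D' cd])
      (use vV lV wV vw lw vl nv nl in \<open>auto simp: closed_nbhd_eq\<close>)
qed

lemma code_dom_bound_attach_pendant_P3:
  assumes fin: "finite V"
    and nw: "nbhd V w = {v, z}" and nv: "nbhd V v = {w, l}" and nl: "nbhd V l = {v}"
    and lw: "l \<noteq> w" and vz: "v \<noteq> z"
    and C': "identifying_code (V - {w,v,l}) E C'" and D': "dominating_set (V - {w,v,l}) E D'"
    and cd: "card C' + card D' \<le> card (V - {w,v,l})"
  shows "code_dom_bound V"
proof -
  let ?X = "{w, v, l}"
  have V: "w \<in> V" "v \<in> V" "l \<in> V" "z \<in> V" using nw nv by (auto dest: nbhd_eq_subset)
  have vw: "v \<noteq> w" and wz: "w \<noteq> z" and vl: "v \<noteq> l" using nbhd_neq nw nl by blast+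
  have lz: "l \<noteq> z" using nbhd_sym[of z V w] nl nw V vw by auto
  have zX: "z \<in> V - ?X" using V wz vz lz by auto
  have nzX: "nbhd V z \<inter> ?X = {w}"
    using nbhd_sym[of v V z] nbhd_sym[of l V z] nbhd_sym[of z V w] nw nv nl V wz lz vz by auto
  have C'sub: "C' \<subseteq> V - ?X" using C' by (simp add: identifying_code_def)
  define T' where "T' = closed_nbhd (V - ?X) E z \<inter> C'"
  have T'ne: "T' \<noteq> {}" using C' zX unfolding T'_def identifying_code_def by blast
  have T'sub: "T' \<subseteq> V - ?X" using C'sub unfolding T'_def by blast
  have T_z: "code_trace V (C' \<union> A) z = T' \<union> (nbhd V z \<inter> A)" if "A \<subseteq> ?X" for A
    using code_trace_split[OF zX that C'sub] unfolding T'_def .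
  have att: "\<forall>x\<in>?X. nbhd V x \<subseteq> insert z ?X" using nw nv nl by auto
  have dom: "\<forall>x\<in>?X. closed_nbhd V E x \<inter> (D' \<union> {v}) \<noteq> {}"
    using V by (auto simp: closed_nbhd_eq nw nv nl)
  have card: "card A + card {v} \<le> card ?X" if "A \<subseteq> ?X" "card A = 2" for A
    using that vw vl lw by simp
  txt \<open>The choice of \<open>A\<close> keeps the traces of \<open>w\<close> and \<open>z\<close> apart.\<close>
  show ?thesis
  proof (cases "z \<in> C' \<and> T' = {z}")
    case True
    let ?A = "{v, w}"
    have T: "code_trace V (C' \<union> ?A) l = {v}" "code_trace V (C' \<union> ?A) v = {v, w}"
      "code_trace V (C' \<union> ?A) w = {w, v, z}" "code_trace V (C' \<union> ?A) z = {z, w}"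
      using C'sub True T_z[of ?A] nzX vl lw
      by (auto simp: code_trace_def closed_nbhd_eq V nl nv nw)
    show ?thesis
    proof (rule code_dom_bound_attach[where A = ?A, OF fin _ zX att C' D' cd _ _ _ _ dom card])
      show "\<forall>x\<in>?X. \<forall>u\<in>insert z ?X. u \<noteq> x \<longrightarrow> code_trace V (C' \<union> ?A) x \<noteq> code_trace V (C' \<union> ?A) u"
        using vw vz wz vl lw lz
        by (simp only: ball_simps T) (simp add: set_eq_subset insert_subset)
      show "\<forall>x\<in>?X. code_trace V (C' \<union> ?A) x \<inter> ?X \<noteq> {}" by (simp only: ball_simps T) simp
    qed (use V vw vl in auto)
  next
    case False
    let ?A = "{l, w}"
    have T: "code_trace V (C' \<union> ?A) l = {l}" "code_trace V (C' \<union> ?A) v = {w, l}"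
      "code_trace V (C' \<union> ?A) w = insert w ({z} \<inter> C')" "code_trace V (C' \<union> ?A) z = insert w T'"
      using C'sub T_z[of ?A] nzX vw vl lw lz
      by (auto simp: code_trace_def closed_nbhd_eq V nl nv nw)
    have "T' \<noteq> {z} \<inter> C'" using False T'ne by auto
    moreover have "w \<notin> T'" "w \<notin> {z} \<inter> C'" using T'sub wz by auto
    ultimately have wz_dist: "insert w ({z} \<inter> C') \<noteq> insert w T'" by (metis insert_ident)
    have l_notin: "l \<notin> T'" "l \<notin> {z} \<inter> C'" using T'sub lz by auto
    show ?thesis
      by (intro code_dom_bound_attach[where A = ?A, OF fin _ zX att C' D' cd _ _ _ _ dom card])
        (use T wz_dist l_notin V vw vl lw in auto)
  qed
qed

text \<open>After trading the leaf \<open>h\<close> for \<open>v\<close> and \<open>w\<close>, the markers \<open>v, w\<close> separate \<open>h, w, v, l, z\<close>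
  from each other and from the rest.\<close>

lemma identifying_code_swap_leaf:
  assumes nw: "nbhd V w = {h, v, z}" and nh: "nbhd V h = {w}" and nv: "nbhd V v = {w, l}"
    and nl: "nbhd V l = {v}" and dist: "distinct [h, w, v, l, z]"
    and C': "identifying_code (V - {v,l}) E C'" and zC: "z \<in> C'" and wC: "w \<notin> C'"
  shows "identifying_code V E (insert v (insert w (C' - {h})))"
proof -
  let ?V' = "V - {v, l}" and ?C = "insert v (insert w (C' - {h}))"
  have V: "w \<in> V" "h \<in> V" "v \<in> V" "l \<in> V" "z \<in> V" using nw nv nh by (auto dest: nbhd_eq_subset)
  have C'sub: "C' \<subseteq> ?V'" using C' by (simp add: identifying_code_def)
  define T' where "T' = code_trace ?V' C' z"
  have T'sub: "T' \<subseteq> ?V'" and zT': "z \<in> T'"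
    using C'sub zC dist V unfolding T'_def code_trace_def closed_nbhd_def by auto
  have z_nbrs: "w \<in> nbhd V z" "v \<notin> nbhd V z" "l \<notin> nbhd V z" "h \<notin> nbhd V z"
    using nbhd_sym[of z V w] nbhd_eq_not_sym[OF nv, of z] nbhd_eq_not_sym[OF nl, of z]
      nbhd_eq_not_sym[OF nh, of z] nw dist V by auto
  have T: "code_trace V ?C h = {w}" "code_trace V ?C w = {w, v, z}" "code_trace V ?C v = {v, w}"
    "code_trace V ?C l = {v}" "code_trace V ?C z = insert w T'"
    using C'sub zC wC dist V z_nbrs
    by (auto simp: code_trace_def T'_def closed_nbhd_eq nw nh nv nl nbhd_Diff)
  have "v \<notin> T'" "l \<notin> T'" "w \<notin> T'" using T'sub wC unfolding T'_def code_trace_def by auto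
  moreover have "h \<noteq> w" "h \<noteq> v" "h \<noteq> l" "h \<noteq> z" "w \<noteq> v" "w \<noteq> l" "w \<noteq> z" "v \<noteq> l" "v \<noteq> z" "l \<noteq> z"
    using dist by auto
  ultimately have traces_dist:
    "\<forall>x\<in>{h,w,v,l,z}. \<forall>y\<in>{h,w,v,l,z}. x \<noteq> y \<longrightarrow> code_trace V ?C x \<noteq> code_trace V ?C y"
    using zT' by (simp only: ball_simps T) (simp add: set_eq_subset insert_subset; blast)
  have unmarked: "code_trace V ?C y = code_trace ?V' C' y \<and> code_trace V ?C y \<inter> {v, w} = {}"
    if y: "y \<in> V - {h,w,v,l,z}" for y
  proof -
    have "v \<notin> nbhd V y" "l \<notin> nbhd V y" "w \<notin> nbhd V y" "h \<notin> nbhd V y"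
      using nbhd_eq_not_sym[OF nv, of y] nbhd_eq_not_sym[OF nl, of y] nbhd_eq_not_sym[OF nw, of y]
        nbhd_eq_not_sym[OF nh, of y] y by auto
    then show ?thesis
      using y C'sub by (auto simp: code_trace_def closed_nbhd_eq nbhd_Diff)
  qed
  show ?thesis
  proof (rule identifying_code_by_markers[OF _ C', where S = "{h,w,v,l,z}" and M = "{v,w}"])
    show "?C \<subseteq> V" using C'sub V by auto
    show "V - {h,w,v,l,z} \<subseteq> ?V'" by auto
    show "\<forall>x\<in>{h,w,v,l,z}. code_trace V ?C x \<inter> {v,w} \<noteq> {}" by (simp only: ball_simps T) simp
  qed (use unmarked traces_dist in blast)+
qed

lemma code_dom_bound_swap_leaf:
  assumes fin: "finite V"
    and nw: "nbhd V w = {h, v, z}" and nh: "nbhd V h = {w}" and nv: "nbhd V v = {w, l}"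
    and nl: "nbhd V l = {v}" and dist: "distinct [h, w, v, l, z]"
    and C': "identifying_code (V - {v,l}) E C'" and D': "dominating_set (V - {v,l}) E D'"
    and cd: "card C' + card D' \<le> card (V - {v,l})" and wC: "w \<notin> C'"
  shows "code_dom_bound V"
proof -
  let ?V' = "V - {v, l}"
  have V: "w \<in> V" "h \<in> V" "v \<in> V" "l \<in> V" "z \<in> V" using nw nv nh by (auto dest: nbhd_eq_subset)
  have nh': "closed_nbhd ?V' E h = {h, w}" and nw': "closed_nbhd ?V' E w = {w, h, z}"
    using V dist by (auto simp: closed_nbhd_eq nbhd_Diff nh nw)
  txt \<open>Since \<open>w \<notin> C'\<close>, the code \<open>C'\<close> must contain \<open>h\<close> and \<open>z\<close>, so the trade costs one vertex.\<close>
  have "closed_nbhd ?V' E h \<inter> C' \<noteq> {}" using C' V dist unfolding identifying_code_def by auto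
  then have hC: "h \<in> C'" using nh' wC by auto
  have zC: "z \<in> C'"
  proof (rule ccontr)
    assume "z \<notin> C'"
    then have "closed_nbhd ?V' E w \<inter> C' = closed_nbhd ?V' E h \<inter> C'" using nh' nw' wC hC by auto
    then show False using C' V dist unfolding identifying_code_def by auto
  qed
  have finC': "finite C'" using fin C' finite_subset unfolding identifying_code_def by blast
  have "card (insert v (insert w (C' - {h}))) \<le> card C' + 1"
    using finC' hC card_gt_0_iff[of C'] by (auto simp: card_insert_if)
  moreover have "card ?V' + 2 = card V"
    using card_Diff_subset[of "{v,l}" V] card_mono[OF fin, of "{v,l}"] V dist by auto
  moreover have "dominating_set V E (D' \<union> {v})"
    by (rule dominating_set_extend[OF D']) (use V in \<open>auto simp: closed_nbhd_eq nv nl\<close>)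
  ultimately show ?thesis
    using identifying_code_swap_leaf[OF nw nh nv nl dist C' zC wC] cd card_Un_le[of D' "{v}"]
    unfolding code_dom_bound_def by (intro exI[of _ "insert v (insert w (C' - {h}))"] exI[of _ "D' \<union> {v}"]) auto
qed

section \<open>Small trees\<close>

lemma code_dom_bound_path3:
  assumes "distinct [a,b,c]" "nbhd V a = {b}" "nbhd V b = {a,c}" "nbhd V c = {b}"
  shows "code_dom_bound {a,b,c}"
proof (rule code_dom_bound_componentI[where C = "{a,c}" and D = "{b}"])
  show "{a,b,c} \<subseteq> V" using assms(2-)[THEN nbhd_eq_subset] by blast
qed (use assms in \<open>auto simp: card_insert_if\<close>)

lemma code_dom_bound_path5:
  assumes "distinct [a,b,c,d,e]"
    and "nbhd V a = {b}" "nbhd V b = {a,c}" "nbhd V c = {b,d}" "nbhd V d = {c,e}" "nbhd V e = {d}"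
  shows "code_dom_bound {a,b,c,d,e}"
proof (rule code_dom_bound_componentI[where C = "{b,c,d}" and D = "{b,d}"])
  show "{a,b,c,d,e} \<subseteq> V" using assms(2-)[THEN nbhd_eq_subset] by blast
qed (use assms in \<open>auto simp: card_insert_if\<close>)

lemma code_dom_bound_path7:
  assumes "distinct [a,b,c,d,e,f,g]"
    and "nbhd V a = {b}" "nbhd V b = {a,c}" "nbhd V c = {b,d}" "nbhd V d = {c,e}"
      "nbhd V e = {d,f}" "nbhd V f = {e,g}" "nbhd V g = {f}"
  shows "code_dom_bound {a,b,c,d,e,f,g}"
proof (rule code_dom_bound_componentI[where C = "{a,c,e,g}" and D = "{b,d,f}"])
  show "{a,b,c,d,e,f,g} \<subseteq> V" using assms(2-)[THEN nbhd_eq_subset] by blast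
qed (use assms in \<open>auto simp: card_insert_if\<close>)

lemma code_dom_bound_spider_112:
  assumes "distinct [v,l1,l2,w,x]"
    and "nbhd V v = {l1,l2,w}" "nbhd V l1 = {v}" "nbhd V l2 = {v}" "nbhd V w = {v,x}" "nbhd V x = {w}"
  shows "code_dom_bound {v,l1,l2,w,x}"
proof (rule code_dom_bound_componentI[where C = "{l1,v,w}" and D = "{v,w}"])
  show "{v,l1,l2,w,x} \<subseteq> V" using assms(2-)[THEN nbhd_eq_subset] by blast
qed (use assms in \<open>auto simp: card_insert_if\<close>)

lemma code_dom_bound_spider_122:
  assumes "distinct [w,h,v1,l1,v2,l2]"
    and "nbhd V w = {h,v1,v2}" "nbhd V h = {w}" "nbhd V v1 = {w,l1}" "nbhd V l1 = {v1}"
      "nbhd V v2 = {w,l2}" "nbhd V l2 = {v2}"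
  shows "code_dom_bound {w,h,v1,l1,v2,l2}"
proof (rule code_dom_bound_componentI[where C = "{w,v1,v2}" and D = "{w,v1,v2}"])
  show "{w,h,v1,l1,v2,l2} \<subseteq> V" using assms(2-)[THEN nbhd_eq_subset] by blast
qed (use assms in \<open>auto simp: card_insert_if\<close>)

lemma code_dom_bound_spider_123:
  assumes "distinct [z,a,c,d,w,v,l]"
    and "nbhd V z = {a,c,w}" "nbhd V a = {z}" "nbhd V c = {z,d}" "nbhd V d = {c}"
      "nbhd V w = {z,v}" "nbhd V v = {w,l}" "nbhd V l = {v}"
  shows "code_dom_bound {z,a,c,d,w,v,l}"
proof (rule code_dom_bound_componentI[where C = "{z,c,w,v}" and D = "{z,c,v}"])
  show "{z,a,c,d,w,v,l} \<subseteq> V" using assms(2-)[THEN nbhd_eq_subset] by blast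
qed (use assms in \<open>auto simp: card_insert_if\<close>)

section \<open>Admissible forests\<close>

text \<open>The three conditions exclude, in this order, components of order one, components of order
  two and components isomorphic to \<open>P\<^sub>4\<close>.\<close>

definition admissible :: "'a set \<Rightarrow> bool" where
  "admissible V \<longleftrightarrow> (\<forall>x\<in>V. nbhd V x \<noteq> {}) \<and>
     \<not> (\<exists>u\<in>V. \<exists>v. nbhd V u = {v} \<and> nbhd V v = {u}) \<and>
     \<not> (\<exists>a\<in>V. \<exists>b c d. distinct [a,b,c,d] \<and>
        nbhd V a = {b} \<and> nbhd V b = {a,c} \<and> nbhd V c = {b,d} \<and> nbhd V d = {c})"

lemma admissible_nbhd_nonempty: "admissible V \<Longrightarrow> x \<in> V \<Longrightarrow> nbhd V x \<noteq> {}"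
  unfolding admissible_def by blast

lemma admissible_no_K2:
  "admissible V \<Longrightarrow> u \<in> V \<Longrightarrow> nbhd V u = {v} \<Longrightarrow> nbhd V v = {u} \<Longrightarrow> False"
  unfolding admissible_def by blast

lemma admissible_no_P4:
  "admissible V \<Longrightarrow> a \<in> V \<Longrightarrow> distinct [a,b,c,d] \<Longrightarrow> nbhd V a = {b} \<Longrightarrow> nbhd V b = {a,c} \<Longrightarrow>
    nbhd V c = {b,d} \<Longrightarrow> nbhd V d = {c} \<Longrightarrow> False"
  unfolding admissible_def by blast

lemma admissible_Diff_closed:
  assumes adm: "admissible V" and closed: "\<forall>x\<in>X. nbhd V x \<subseteq> X"
  shows "admissible (V - X)"
proof -
  have same: "nbhd (V - X) u = nbhd V u" if "u \<in> V - X" for u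
  proof -
    have "nbhd V u \<inter> X = {}" using that closed nbhd_sym by blast
    then show ?thesis by (auto simp: nbhd_Diff)
  qed
  have inV: "u \<in> V - X" if "u \<in> nbhd (V - X) x" for u x
    using that nbhd_subset by blast
  show ?thesis
    unfolding admissible_def
  proof (intro conjI ballI notI)
    fix x assume "x \<in> V - X" "nbhd (V - X) x = {}"
    then show False using same admissible_nbhd_nonempty[OF adm] by auto
  next
    assume "\<exists>u\<in>V - X. \<exists>v. nbhd (V - X) u = {v} \<and> nbhd (V - X) v = {u}"
    then show False using admissible_no_K2[OF adm] same inV by (metis DiffD1 insertI1)
  next
    assume "\<exists>a\<in>V - X. \<exists>b c d. distinct [a,b,c,d] \<and> nbhd (V - X) a = {b} \<and>
      nbhd (V - X) b = {a,c} \<and> nbhd (V - X) c = {b,d} \<and> nbhd (V - X) d = {c}"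
    then obtain a b c d where a: "a \<in> V - X" and dd: "distinct [a,b,c,d]" and
      n: "nbhd (V - X) a = {b}" "nbhd (V - X) b = {a,c}" "nbhd (V - X) c = {b,d}" "nbhd (V - X) d = {c}"
      by blast
    have "b \<in> V - X" "c \<in> V - X" "d \<in> V - X" using n inV by blast+
    then show False using admissible_no_P4[OF adm _ dd] a n same by simp
  qed
qed

lemma code_dom_bound_by_component:
  assumes fin: "finite V" and adm: "admissible V"
    and IH: "\<And>W. W \<subset> V \<Longrightarrow> admissible W \<Longrightarrow> code_dom_bound W"
    and XV: "X \<subseteq> V" and Xne: "X \<noteq> {}" and closed: "\<forall>x\<in>X. nbhd V x \<subseteq> X"
    and X: "code_dom_bound X"
  shows "code_dom_bound V"
proof -
  have "code_dom_bound (V - X)"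
    using IH[of "V - X"] admissible_Diff_closed[OF adm closed] XV Xne by blast
  moreover have "\<not> E u x" if "u \<in> V - X" "x \<in> X" for u x
    using that closed adj_sym unfolding nbhd_def by blast
  ultimately have "code_dom_bound ((V - X) \<union> X)"
    using code_dom_bound_disjoint_Un[OF _ _ _ _ _ X] fin XV finite_subset by blast
  then show ?thesis using XV by (simp add: Un_absorb2)
qed

lemma P4_through_attachment:
  assumes same: "\<And>u. u \<in> V - X \<Longrightarrow> u \<noteq> s \<Longrightarrow> nbhd (V - X) u = nbhd V u"
    and s: "s = a \<or> s = b" and dd: "distinct [a,b,c,d]" and in_VX: "a \<in> V - X" "b \<in> V - X" "c \<in> V - X" "d \<in> V - X"
    and n: "nbhd (V-X) a = {b}" "nbhd (V-X) b = {a,c}" "nbhd (V-X) c = {b,d}" "nbhd (V-X) d = {c}"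
  shows "(\<exists>b c d. distinct [s,b,c,d] \<and> nbhd (V-X) s = {b} \<and> nbhd V b = {s,c} \<and> nbhd V c = {b,d} \<and>
         nbhd V d = {c} \<and> b \<in> V - X \<and> c \<in> V - X \<and> d \<in> V - X)
    \<or> (\<exists>a c d. distinct [a,s,c,d] \<and> nbhd V a = {s} \<and> nbhd (V-X) s = {a,c} \<and> nbhd V c = {s,d} \<and>
         nbhd V d = {c} \<and> a \<in> V - X \<and> c \<in> V - X \<and> d \<in> V - X)"
  using s
proof
  assume "s = a"
  then have "nbhd V b = {s,c}" "nbhd V c = {b,d}" "nbhd V d = {c}"
    using dd n in_VX same[of b] same[of c] same[of d] by auto
  then show ?thesis
    using \<open>s = a\<close> dd n in_VX by (intro disjI1 exI[of _ b] exI[of _ c] exI[of _ d]) simp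
next
  assume "s = b"
  then have "nbhd V a = {s}" "nbhd V c = {s,d}" "nbhd V d = {c}"
    using dd n in_VX same[of a] same[of c] same[of d] by auto
  then show ?thesis
    using \<open>s = b\<close> dd n in_VX by (intro disjI2 exI[of _ a] exI[of _ c] exI[of _ d]) simp
qed

lemma bad_component_at_attachment:
  assumes adm: "admissible V" and s: "s \<in> V - X"
    and att: "\<forall>x\<in>X. nbhd V x \<subseteq> insert s X"
    and sne: "nbhd (V - X) s \<noteq> {}" and inadm: "\<not> admissible (V - X)"
  shows "(\<exists>y. nbhd (V-X) s = {y} \<and> nbhd V y = {s} \<and> y \<noteq> s \<and> y \<in> V - X)
    \<or> (\<exists>b c d. distinct [s,b,c,d] \<and> nbhd (V-X) s = {b} \<and> nbhd V b = {s,c} \<and> nbhd V c = {b,d} \<and>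
         nbhd V d = {c} \<and> b \<in> V - X \<and> c \<in> V - X \<and> d \<in> V - X)
    \<or> (\<exists>a c d. distinct [a,s,c,d] \<and> nbhd V a = {s} \<and> nbhd (V-X) s = {a,c} \<and> nbhd V c = {s,d} \<and>
         nbhd V d = {c} \<and> a \<in> V - X \<and> c \<in> V - X \<and> d \<in> V - X)"
proof -
  have same: "nbhd (V - X) u = nbhd V u" if "u \<in> V - X" "u \<noteq> s" for u
    using nbhd_Int_attached[OF att that] by (auto simp: nbhd_Diff)
  have inV: "u \<in> V - X" if "u \<in> nbhd (V - X) x" for u x using that by (auto simp: nbhd_def)
  from inadm consider (iso) x where "x \<in> V - X" "nbhd (V-X) x = {}"
    | (K2) u v where "u \<in> V - X" "nbhd (V-X) u = {v}" "nbhd (V-X) v = {u}"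
    | (P4) a b c d where "a \<in> V - X" "distinct [a,b,c,d]" "nbhd (V-X) a = {b}" "nbhd (V-X) b = {a,c}"
        "nbhd (V-X) c = {b,d}" "nbhd (V-X) d = {c}"
    unfolding admissible_def by blast
  then show ?thesis
  proof cases
    case iso
    then have "x \<noteq> s" using sne by blast
    then show ?thesis using iso same admissible_nbhd_nonempty[OF adm, of x] by simp
  next
    case K2
    have v: "v \<in> V - X" and "u \<noteq> v" using K2 inV nbhd_neq by blast+
    consider "u = s" | "v = s" | "u \<noteq> s" "v \<noteq> s" by blast
    then show ?thesis
    proof cases
      case 1
      then show ?thesis using K2 v \<open>u \<noteq> v\<close> same[of v] by auto
    next
      case 2
      then show ?thesis using K2 \<open>u \<noteq> v\<close> same[of u] by auto
    next
      case 3
      then show ?thesis using K2 v same admissible_no_K2[OF adm, of u v] by auto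
    qed
  next
    case P4
    then have in_VX: "b \<in> V - X" "c \<in> V - X" "d \<in> V - X" using inV by blast+
    consider "s = a \<or> s = b" | "s = d \<or> s = c" | "s \<notin> {a,b,c,d}" by blast
    then show ?thesis
    proof cases
      case 1
      show ?thesis using P4_through_attachment[OF same 1 P4(2) P4(1) in_VX P4(3-)] by blast
    next
      case 2
      have "distinct [d,c,b,a]" "nbhd (V-X) c = {d,b}" "nbhd (V-X) b = {c,a}"
        using P4 by (auto simp: insert_commute)
      then show ?thesis
        using P4_through_attachment[OF same 2 _ in_VX(3,2,1) P4(1)] P4(6,3) by blast
    next
      case 3
      then have "nbhd V a = {b}" "nbhd V b = {a,c}" "nbhd V c = {b,d}" "nbhd V d = {c}"
        using P4 in_VX same by auto
      then show ?thesis using admissible_no_P4[OF adm _ P4(2)] P4(1) by blast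
    qed
  qed
qed
section \<open>Reductions\<close>

lemma code_dom_bound_strong_support:
  assumes fin: "finite V" and adm: "admissible V"
    and IH: "\<And>W. W \<subset> V \<Longrightarrow> admissible W \<Longrightarrow> code_dom_bound W"
    and l1V: "l1 \<in> V" and l2V: "l2 \<in> V" and l12: "l1 \<noteq> l2"
    and n1: "nbhd V l1 = {v}" and n2: "nbhd V l2 = {v}"
  shows "code_dom_bound V"
proof -
  have vV: "v \<in> V" using nbhd_eq_subset[OF n1] by simp
  have E1: "l1 \<in> nbhd V v" and E2: "l2 \<in> nbhd V v"
    using nbhd_sym[of v V l1] nbhd_sym[of v V l2] n1 n2 l1V l2V by auto
  have vl1: "v \<noteq> l1" and vl2: "v \<noteq> l2" using nbhd_neq n1 n2 by blast+
  have l2': "l2 \<in> nbhd (V - {l1}) v" using E2 l12 by (simp add: nbhd_Diff)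
  show ?thesis
  proof (cases "nbhd V v = {l1, l2}")
    case True
    have "code_dom_bound {l1,v,l2}"
      using code_dom_bound_path3[OF _ n1 True n2] vl1 vl2 l12 by auto
    then show ?thesis
      by (rule code_dom_bound_by_component[OF fin adm IH, rotated -1])
        (use True n1 n2 vV l1V l2V in auto)
  next
    case notP3: False
    show ?thesis
    proof (cases "admissible (V - {l1})")
      case True
      then show ?thesis
        using code_dom_bound_remove_twin_leaf[OF fin l1V l2V l12 n1 n2] IH[of "V - {l1}"] l1V by blast
    next
      case False
      from bad_component_at_attachment[OF adm _ _ _ False, of v] l1V vV vl1 n1 l2'
      consider (K2) y where "nbhd (V - {l1}) v = {y}"
        | (P4_end) b c d where "nbhd (V - {l1}) v = {b}" "nbhd V b = {v,c}" "distinct [v,b,c,d]"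
        | (P4_inner) a c d where "distinct [a,v,c,d]" "nbhd V a = {v}" "nbhd (V - {l1}) v = {a,c}"
            "nbhd V c = {v,d}" "nbhd V d = {c}" "a \<in> V - {l1}" "c \<in> V - {l1}" "d \<in> V - {l1}"
        by auto blast+
      then show ?thesis
      proof cases
        case K2
        then have "nbhd V v = {l2, l1}"
          using nbhd_split[of V v "{l1}"] l2' E1 by auto
        then show ?thesis using notP3 by (simp add: insert_commute)
      next
        case P4_end
        then show ?thesis using l2' n2 by auto
      next
        case P4_inner
        have "l2 \<noteq> c" using P4_inner n2 by auto
        then have a: "a = l2" using P4_inner l2' by auto
        have nv: "nbhd V v = {l1, l2, c}"
          using nbhd_split[of V v "{l1}"] P4_inner a E1 by auto
        have "code_dom_bound {v,l1,l2,c,d}"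
          using code_dom_bound_spider_112[OF _ nv n1 n2 P4_inner(4,5)] P4_inner a vl1 l12 by auto
        then show ?thesis
          by (rule code_dom_bound_by_component[OF fin adm IH, rotated -1])
            (use nv n1 n2 P4_inner a vV l1V l2V in auto)
      qed
    qed
  qed
qed

lemma code_dom_bound_two_pendant_P2:
  assumes fin: "finite V" and adm: "admissible V"
    and IH: "\<And>W. W \<subset> V \<Longrightarrow> admissible W \<Longrightarrow> code_dom_bound W"
    and v12: "v1 \<noteq> v2"
    and nv1: "nbhd V v1 = {w, l1}" and nl1: "nbhd V l1 = {v1}"
    and nv2: "nbhd V v2 = {w, l2}" and nl2: "nbhd V l2 = {v2}"
    and l1w: "l1 \<noteq> w" and l2w: "l2 \<noteq> w"
  shows "code_dom_bound V"
proof -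
  have V: "w \<in> V" "v1 \<in> V" "l1 \<in> V" "v2 \<in> V" "l2 \<in> V"
    using nv1 nl1 nv2 nl2 by (auto dest: nbhd_eq_subset)
  have v1w: "v1 \<noteq> w" and v2w: "v2 \<noteq> w" and v1l1: "v1 \<noteq> l1"
    using nbhd_neq nv1 nv2 nl1 nl2 by blast+
  have l12: "l1 \<noteq> l2" and v1l2: "v1 \<noteq> l2" and v2l1: "v2 \<noteq> l1"
    using nl1 nl2 nv1 nv2 v12 v1w v2w by auto
  let ?X = "{v1, l1}"
  have att: "\<forall>x\<in>?X. nbhd V x \<subseteq> insert w ?X" using nv1 nl1 by auto
  have v2in: "v2 \<in> nbhd (V - ?X) w"
    using nbhd_sym[of w V v2] nv2 V v12 v2l1 by (auto simp: nbhd_Diff)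
  show ?thesis
  proof (cases "admissible (V - ?X)")
    case True
    then obtain C' D' where C': "identifying_code (V - ?X) E C'" and D': "dominating_set (V - ?X) E D'"
      and cd: "card C' + card D' \<le> card (V - ?X)"
      using IH[of "V - ?X"] V unfolding code_dom_bound_def by blast
    have "w \<in> C'"
      by (rule support_nbr_in_code[OF C', of v2 l2])
        (use V v12 v2l1 l12 v1l2 nv2 nl2 v1w l1w l2w in \<open>auto simp: nbhd_Diff\<close>)
    then show ?thesis
      using code_dom_bound_attach_pendant_P2[OF fin nv1 nl1 l1w C' D' cd] by simp
  next
    case False
    from bad_component_at_attachment[OF adm _ att _ False] V v1w l1w v2in
    consider (K2) y where "nbhd (V - ?X) w = {y}" "nbhd V y = {w}"
      | (P4_end) b c d where "distinct [w,b,c,d]" "nbhd (V - ?X) w = {b}" "nbhd V b = {w,c}" "nbhd V c = {b,d}"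
      | (P4_inner) a c d where "distinct [a,w,c,d]" "nbhd V a = {w}" "nbhd (V - ?X) w = {a,c}"
          "nbhd V c = {w,d}" "nbhd V d = {c}" "a \<in> V - ?X"
      by auto blast+
    then show ?thesis
    proof cases
      case K2
      then show ?thesis using v2in nv2 l2w by auto
    next
      case P4_end
      then show ?thesis using v2in nv2 nl2 by (auto simp: doubleton_eq_iff)
    next
      case P4_inner
      have "v2 \<noteq> a" using P4_inner nv2 l2w by auto
      then have c: "c = v2" using P4_inner v2in by auto
      then have d: "d = l2" using P4_inner nv2 by (auto simp: doubleton_eq_iff)
      have nw: "nbhd V w = {a, v1, v2}"
        using nbhd_split[of V w ?X] P4_inner c nbhd_sym[of w V v1] nv1 nbhd_sym[of l1 V w] nl1 v1w V by auto
      have "code_dom_bound {w,a,v1,l1,v2,l2}"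
        using code_dom_bound_spider_122[OF _ nw P4_inner(2) nv1 nl1 nv2 nl2] P4_inner c d v1w l1w v1l1 v12 v2l1 v1l2 l12
        by auto
      then show ?thesis
        by (rule code_dom_bound_by_component[OF fin adm IH, rotated -1])
          (use nw P4_inner nv1 nl1 nv2 nl2 V in auto)
    qed
  qed
qed

lemma code_dom_bound_pendant_P3:
  assumes fin: "finite V" and adm: "admissible V"
    and IH: "\<And>W. W \<subset> V \<Longrightarrow> admissible W \<Longrightarrow> code_dom_bound W"
    and nw: "nbhd V w = {v, z}" and nv: "nbhd V v = {w, l}" and nl: "nbhd V l = {v}"
    and lw: "l \<noteq> w" and vz: "v \<noteq> z" and z_nonleaf: "\<exists>y\<in>nbhd V z. y \<noteq> w"
  shows "code_dom_bound V"
proof -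
  let ?X = "{w, v, l}"
  have V: "w \<in> V" "v \<in> V" "l \<in> V" "z \<in> V" using nw nv by (auto dest: nbhd_eq_subset)
  have vw: "v \<noteq> w" and wz: "w \<noteq> z" and vl: "v \<noteq> l" using nbhd_neq nw nl by blast+
  have lz: "l \<noteq> z" using nbhd_sym[of z V w] nl nw V vw by auto
  have "nbhd V z \<inter> ?X = {w}"
    using nbhd_sym[of v V z] nbhd_sym[of l V z] nbhd_sym[of z V w] nw nv nl V wz lz vz by auto
  then have nz: "nbhd V z = insert w (nbhd (V - ?X) z)"
    using nbhd_split[of V z ?X] by auto
  show ?thesis
  proof (cases "admissible (V - ?X)")
    case True
    then show ?thesis
      using IH[of "V - ?X"] V code_dom_bound_attach_pendant_P3[OF fin nw nv nl lw vz]
      unfolding code_dom_bound_def by blast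
  next
    case False
    have "nbhd (V - ?X) z \<noteq> {}" using z_nonleaf nz by auto
    from bad_component_at_attachment[OF adm _ _ this False] V wz vz lz nw nv nl
    consider (K2) y where "nbhd (V - ?X) z = {y}" "nbhd V y = {z}" "y \<in> V - ?X"
      | (P4_end) b c d where "distinct [z,b,c,d]" "nbhd (V - ?X) z = {b}" "nbhd V b = {z,c}"
          "nbhd V c = {b,d}" "nbhd V d = {c}" "b \<in> V - ?X" "c \<in> V - ?X" "d \<in> V - ?X"
      | (P4_inner) a c d where "distinct [a,z,c,d]" "nbhd V a = {z}" "nbhd (V - ?X) z = {a,c}"
          "nbhd V c = {z,d}" "nbhd V d = {c}" "a \<in> V - ?X" "c \<in> V - ?X" "d \<in> V - ?X"
      by auto
    then show ?thesis
    proof cases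
      case K2
      have "code_dom_bound {l,v,w,z,y}"
        using code_dom_bound_path5[OF _ nl _ nw _ K2(2)] nv nz K2
          vl lw lz vw vz wz by (auto simp: insert_commute)
      then show ?thesis
        by (rule code_dom_bound_by_component[OF fin adm IH, rotated -1])
          (use nl nv nw nz K2 V in auto)
    next
      case P4_end
      have "code_dom_bound {l,v,w,z,b,c,d}"
        using code_dom_bound_path7[OF _ nl _ nw _ P4_end(3-5)] nv nz P4_end
          vl lw lz vw vz wz by (auto simp: insert_commute)
      then show ?thesis
        by (rule code_dom_bound_by_component[OF fin adm IH, rotated -1])
          (use nl nv nw nz P4_end V in auto)
    next
      case P4_inner
      have "code_dom_bound {z,a,c,d,w,v,l}"
        using code_dom_bound_spider_123[OF _ _ P4_inner(2,4,5) _ nv nl] nv nw nz P4_inner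
          vl lw lz vw vz wz by (auto simp: insert_commute)
      then show ?thesis
        by (rule code_dom_bound_by_component[OF fin adm IH, rotated -1])
          (use nl nv nw nz P4_inner V in auto)
    qed
  qed
qed

lemma code_dom_bound_leaf_and_pendant_P2:
  assumes fin: "finite V" and adm: "admissible V"
    and IH: "\<And>W. W \<subset> V \<Longrightarrow> admissible W \<Longrightarrow> code_dom_bound W"
    and nw: "nbhd V w = {h, v, z}" and nh: "nbhd V h = {w}" and nv: "nbhd V v = {w, l}"
    and nl: "nbhd V l = {v}" and lw: "l \<noteq> w" and vz: "v \<noteq> z"
    and z_nonleaf: "\<nexists>y. nbhd V z = {y}"
  shows "code_dom_bound V"
proof -
  let ?X = "{v, l}"
  have V: "w \<in> V" "h \<in> V" "v \<in> V" "l \<in> V" "z \<in> V" using nw nv nh by (auto dest: nbhd_eq_subset)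
  have vw: "v \<noteq> w" and hw: "h \<noteq> w" and wz: "w \<noteq> z" and vl: "v \<noteq> l"
    using nbhd_neq nw nv nl by blast+
  have hz: "h \<noteq> z" using z_nonleaf nh by auto
  have hv: "h \<noteq> v" using nh nv lw by auto
  have lz: "l \<noteq> z" using nbhd_sym[of z V w] nl nw V vw by auto
  have lh: "l \<noteq> h" using nl nh vw by auto
  have dist: "distinct [h, w, v, l, z]" using hw hv lh hz vw lw wz vl vz lz by auto
  have nw': "nbhd (V - ?X) w = {h, z}" using nw hv lh vz lz by (auto simp: nbhd_Diff)
  show ?thesis
  proof (cases "admissible (V - ?X)")
    case True
    then obtain C' D' where C': "identifying_code (V - ?X) E C'" and D': "dominating_set (V - ?X) E D'"
      and cd: "card C' + card D' \<le> card (V - ?X)"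
      using IH[of "V - ?X"] V unfolding code_dom_bound_def by blast
    show ?thesis
    proof (cases "w \<in> C'")
      case True
      then show ?thesis using code_dom_bound_attach_pendant_P2[OF fin nv nl lw C' D' cd] by simp
    next
      case False
      then show ?thesis using code_dom_bound_swap_leaf[OF fin nw nh nv nl dist C' D' cd] by simp
    qed
  next
    case False
    have att: "\<forall>x\<in>?X. nbhd V x \<subseteq> insert w ?X" using nv nl by auto
    from bad_component_at_attachment[OF adm _ att _ False] V vw lw nw'
    obtain a c d where "nbhd (V - ?X) w = {a,c}" "nbhd V a = {w}" "nbhd V c = {w,d}" "nbhd V d = {c}"
      "distinct [a,w,c,d]" "d \<in> V - ?X"
      using hz by (auto simp: doubleton_eq_iff)
    moreover have "a \<noteq> z" using calculation(2) z_nonleaf by blast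
    ultimately have a: "a = h" and c: "c = z" and nz: "nbhd V z = {w,d}" and nd: "nbhd V d = {z}"
      and "distinct [w,h,v,l,z,d]"
      using nw' dist by (auto simp: doubleton_eq_iff)
    then have "code_dom_bound {w,h,v,l,z,d}"
      using code_dom_bound_spider_122[OF _ nw nh nv nl nz nd] by simp
    then show ?thesis
      by (rule code_dom_bound_by_component[OF fin adm IH, rotated -1])
        (use V nbhd_eq_subset[OF nz] nw nh nv nl nz nd in auto)
  qed
qed

definition has_strong_support :: "'a set \<Rightarrow> bool" where
  "has_strong_support V \<longleftrightarrow>
     (\<exists>v l1 l2. l1 \<in> V \<and> l2 \<in> V \<and> l1 \<noteq> l2 \<and> nbhd V l1 = {v} \<and> nbhd V l2 = {v})"

lemma leaves_eq_if_no_strong_support: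
  "\<not> has_strong_support V \<Longrightarrow> l1 \<in> V \<Longrightarrow> l2 \<in> V \<Longrightarrow> nbhd V l1 = {v} \<Longrightarrow> nbhd V l2 = {v} \<Longrightarrow> l1 = l2"
  unfolding has_strong_support_def by blast

definition nonleaves :: "'a set \<Rightarrow> 'a set" where
  "nonleaves V = {x \<in> V. \<nexists>y. nbhd V x = {y}}"

definition branch_vertices :: "'a set \<Rightarrow> 'a set" where
  "branch_vertices V = {x \<in> nonleaves V. \<nexists>y. nbhd (nonleaves V) x \<subseteq> {y}}"

lemma nonleaf_two_nbrs:
  assumes adm: "admissible V" and x: "x \<in> nonleaves V"
  obtains p q where "p \<in> nbhd V x" "q \<in> nbhd V x" "p \<noteq> q"
proof -
  have xV: "x \<in> V" and nonleaf: "\<And>y. nbhd V x \<noteq> {y}" using x unfolding nonleaves_def by auto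
  obtain p where p: "p \<in> nbhd V x" using admissible_nbhd_nonempty[OF adm xV] by blast
  moreover obtain q where "q \<in> nbhd V x" "q \<noteq> p" using p nonleaf[of p] by blast
  ultimately show thesis using that by blast
qed

lemma leaf_nbhd_eq: "nbhd V y = {t} \<Longrightarrow> y \<in> nbhd V x \<Longrightarrow> x \<in> V \<Longrightarrow> nbhd V y = {x}"
  using nbhd_sym[of y V x] by simp

lemma pendant_P2_at:
  assumes adm: "admissible V" and no_strong: "\<not> has_strong_support V"
    and u: "u \<in> nonleaves V" and w: "w \<in> nbhd V u"
    and others: "\<And>m. m \<in> nbhd V u \<Longrightarrow> m \<noteq> w \<Longrightarrow> m \<notin> nonleaves V"
  obtains l where "nbhd V u = {w, l}" "nbhd V l = {u}" "l \<noteq> w"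
proof -
  have uV: "u \<in> V" using u unfolding nonleaves_def by blast
  have leaf: "nbhd V m = {u}" if m: "m \<in> nbhd V u" "m \<noteq> w" for m
  proof -
    have "m \<in> V" using m(1) nbhd_subset by blast
    then obtain y where "nbhd V m = {y}" using others[OF m] unfolding nonleaves_def by blast
    then show ?thesis using leaf_nbhd_eq m(1) uV by blast
  qed
  obtain p q where "p \<in> nbhd V u" "q \<in> nbhd V u" "p \<noteq> q"
    using nonleaf_two_nbrs[OF adm u] .
  then obtain l where l: "l \<in> nbhd V u" "l \<noteq> w" by blast
  have "m \<in> {w, l}" if "m \<in> nbhd V u" for m
  proof (rule ccontr)
    assume "m \<notin> {w, l}"
    then show False
      using leaves_eq_if_no_strong_support[OF no_strong _ _ leaf[OF that] leaf[OF l]] that l nbhd_subset by blast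
  qed
  then have "nbhd V u = {w, l}" using w l by blast
  then show thesis using that leaf l by blast
qed

lemma pendant_P2_at_nonbranch:
  assumes adm: "admissible V" and no_strong: "\<not> has_strong_support V"
    and w: "w \<in> nonleaves V" and u: "u \<in> nbhd V w" "u \<in> nonleaves V - branch_vertices V"
  obtains l where "nbhd V u = {w, l}" "nbhd V l = {u}" "l \<noteq> w"
proof -
  have wV: "w \<in> V" using w unfolding nonleaves_def by blast
  obtain y where y: "nbhd (nonleaves V) u \<subseteq> {y}" using u unfolding branch_vertices_def by blast
  have "w \<in> nbhd (nonleaves V) u" using nbhd_sym[OF u(1) wV] w unfolding nbhd_def by blast
  then have "m \<notin> nonleaves V" if "m \<in> nbhd V u" "m \<noteq> w" for m
    using y that unfolding nbhd_def by blast
  then show thesis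
    using pendant_P2_at[OF adm no_strong _ nbhd_sym[OF u(1) wV]] u(2) that by blast
qed

lemma branch_vertex_exists:
  assumes adm: "admissible V" and no_strong: "\<not> has_strong_support V"
    and "V \<noteq> {}"
  shows "branch_vertices V \<noteq> {}"
proof
  assume none: "branch_vertices V = {}"
  have pendant: "\<exists>l. nbhd V x = {y, l} \<and> nbhd V l = {x} \<and> l \<noteq> y"
    if x: "x \<in> nonleaves V" and y: "y \<in> nbhd V x" "y \<in> nonleaves V" for x y
  proof -
    have "x \<in> nbhd V y" using nbhd_sym[OF y(1)] x unfolding nonleaves_def by blast
    moreover have "x \<in> nonleaves V - branch_vertices V" using x none by blast
    ultimately obtain l where "nbhd V x = {y, l}" "nbhd V l = {x}" "l \<noteq> y"
      using pendant_P2_at_nonbranch[OF adm no_strong y(2)] by blast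
    then show ?thesis by blast
  qed
  obtain x0 where x0: "x0 \<in> V" using \<open>V \<noteq> {}\<close> by blast
  obtain x where x: "x \<in> nonleaves V"
  proof (cases "x0 \<in> nonleaves V")
    case False
    then obtain y where y: "nbhd V x0 = {y}" using x0 unfolding nonleaves_def by blast
    then have yV: "y \<in> V" using nbhd_subset by blast
    have "nbhd V y \<noteq> {x0}" using admissible_no_K2[OF adm x0 y] by blast
    then have "y \<in> nonleaves V"
      using leaf_nbhd_eq[of V y _ x0] y x0 yV unfolding nonleaves_def by auto
    then show thesis using that by blast
  qed (use that in blast)
  have xV: "x \<in> V" using x unfolding nonleaves_def by blast
  have "\<exists>y. y \<in> nbhd V x \<and> y \<in> nonleaves V"
  proof (rule ccontr)
    assume "\<nexists>y. y \<in> nbhd V x \<and> y \<in> nonleaves V"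
    then have leaves: "m \<notin> nonleaves V" if "m \<in> nbhd V x" for m using that by blast
    obtain p q where pq: "p \<in> nbhd V x" "q \<in> nbhd V x" "p \<noteq> q" using nonleaf_two_nbrs[OF adm x] .
    then have "nbhd V p = {x}" "nbhd V q = {x}"
      using leaves nbhd_subset leaf_nbhd_eq[OF _ _ xV] unfolding nonleaves_def by blast+
    then show False using leaves_eq_if_no_strong_support[OF no_strong] pq nbhd_subset by blast
  qed
  then obtain y where y: "y \<in> nbhd V x" "y \<in> nonleaves V" by blast
  obtain l where l: "nbhd V x = {y, l}" "nbhd V l = {x}" "l \<noteq> y" using pendant[OF x y] by blast
  obtain l' where l': "nbhd V y = {x, l'}" "nbhd V l' = {y}" "l' \<noteq> x"
    using pendant[OF y(2) nbhd_sym[OF y(1) xV] x] by blast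
  have "distinct [l, x, y, l']"
    using l l' nbhd_neq[of x V y] y(1) nbhd_neq[of l V x] nbhd_neq[of l' V y] by auto
  then show False
    using admissible_no_P4[OF adm _ _ l(2) _ l'(1,2)] l(1) nbhd_eq_subset[OF l(1)]
    by (auto simp: insert_commute)
qed

lemma reducible_configuration:
  assumes fin: "finite V" and acy: "acyclic_graph V E" and adm: "admissible V"
    and no_strong: "\<not> has_strong_support V" and "V \<noteq> {}"
  obtains (two_pendant_P2) w v1 l1 v2 l2 where "v1 \<noteq> v2" "nbhd V v1 = {w, l1}" "nbhd V l1 = {v1}"
      "nbhd V v2 = {w, l2}" "nbhd V l2 = {v2}" "l1 \<noteq> w" "l2 \<noteq> w"
  | (pendant_P3) w v l z where "nbhd V w = {v, z}" "nbhd V v = {w, l}" "nbhd V l = {v}" "l \<noteq> w"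
      "v \<noteq> z" "\<exists>y\<in>nbhd V z. y \<noteq> w"
  | (leaf_and_pendant_P2) w h v l z where "nbhd V w = {h, v, z}" "nbhd V h = {w}" "nbhd V v = {w, l}"
      "nbhd V l = {v}" "l \<noteq> w" "v \<noteq> z" "\<nexists>y. nbhd V z = {y}"
proof -
  let ?F1 = "nonleaves V" and ?F2 = "branch_vertices V"
  have F1V: "?F1 \<subseteq> V" and F2F1: "?F2 \<subseteq> ?F1"
    unfolding nonleaves_def branch_vertices_def by auto
  obtain w t where wF2: "w \<in> ?F2" and low: "nbhd ?F2 w \<subseteq> {t}"
    using acyclic_low_degree_vertex[OF finite_subset[OF _ fin] branch_vertex_exists[OF adm no_strong \<open>V \<noteq> {}\<close>]
        acyclic_graph_subset[OF acy]] F1V F2F1 by blast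
  have wF1: "w \<in> ?F1" and wV: "w \<in> V" using wF2 F2F1 F1V by blast+
  have pendant: "\<exists>l. nbhd V u = {w, l} \<and> nbhd V l = {u} \<and> l \<noteq> w"
    if "u \<in> nbhd V w" "u \<in> ?F1 - ?F2" for u
    using pendant_P2_at_nonbranch[OF adm no_strong wF1 that] by metis
  obtain p q where "p \<in> nbhd ?F1 w" "q \<in> nbhd ?F1 w" "p \<noteq> q"
    using wF2 unfolding branch_vertices_def by blast
  then have pq: "p \<in> nbhd V w" "q \<in> nbhd V w" "p \<in> ?F1" "q \<in> ?F1" "p \<noteq> q"
    using F1V unfolding nbhd_def by blast+
  show thesis
  proof (cases "\<exists>v1 v2. v1 \<in> nbhd V w \<and> v2 \<in> nbhd V w \<and> v1 \<noteq> v2 \<and> v1 \<in> ?F1 - ?F2 \<and> v2 \<in> ?F1 - ?F2")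
    case True
    then obtain v1 v2 where "v1 \<in> nbhd V w" "v2 \<in> nbhd V w" "v1 \<noteq> v2" "v1 \<in> ?F1 - ?F2" "v2 \<in> ?F1 - ?F2"
      by blast
    then show thesis using two_pendant_P2 pendant by metis
  next
    case False
    have F2_nbr: "u = t" if "u \<in> nbhd V w" "u \<in> ?F2" for u
      using low that unfolding nbhd_def by blast
    have "p \<in> ?F2 \<longleftrightarrow> q \<notin> ?F2" using pq False F2_nbr by blast
    then obtain v z where vz: "v \<in> nbhd V w" "z \<in> nbhd V w" "v \<in> ?F1 - ?F2" "z \<in> ?F2"
      using pq by (cases "p \<in> ?F2") blast+
    obtain l where l: "nbhd V v = {w, l}" "nbhd V l = {v}" "l \<noteq> w" using pendant vz by blast
    have v_z: "v \<noteq> z" using vz by blast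
    have z_nonleaf: "\<nexists>y. nbhd V z = {y}" using vz F2F1 unfolding nonleaves_def by blast
    have leaf: "nbhd V u = {w}" if "u \<in> nbhd V w" "u \<noteq> v" "u \<noteq> z" for u
    proof -
      have "u \<notin> ?F1" using that vz False F2_nbr by blast
      moreover have "u \<in> V" using that nbhd_subset by blast
      ultimately obtain y where "nbhd V u = {y}" unfolding nonleaves_def by blast
      then show ?thesis using leaf_nbhd_eq that(1) wV by blast
    qed
    show thesis
    proof (cases "\<exists>h\<in>nbhd V w. h \<noteq> v \<and> h \<noteq> z")
      case True
      then obtain h where h: "h \<in> nbhd V w" "h \<noteq> v" "h \<noteq> z" by blast
      have "u \<in> {h, v, z}" if "u \<in> nbhd V w" for u
        using leaf[OF that] leaf[OF h] leaves_eq_if_no_strong_support[OF no_strong, of u h w] h that nbhd_subset by blast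
      then have "nbhd V w = {h, v, z}" using h vz by blast
      then show thesis using leaf_and_pendant_P2 leaf[OF h] l v_z z_nonleaf by blast
    next
      case False
      then have nw: "nbhd V w = {v, z}" using vz by blast
      obtain p' q' where "p' \<in> nbhd V z" "q' \<in> nbhd V z" "p' \<noteq> q'"
        using nonleaf_two_nbrs[OF adm] vz F2F1 by blast
      then have "\<exists>y\<in>nbhd V z. y \<noteq> w" by (cases "p' = w") auto
      then show thesis using pendant_P3 nw l v_z by blast
    qed
  qed
qed

lemma code_dom_bound_step:
  assumes fin: "finite V" and acy: "acyclic_graph V E" and adm: "admissible V"
    and IH: "\<And>W. W \<subset> V \<Longrightarrow> admissible W \<Longrightarrow> code_dom_bound W"
  shows "code_dom_bound V"
proof (cases "V = {}")
  case True
  then show ?thesis using code_dom_bound_empty by simp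
next
  case False
  show ?thesis
  proof (cases "has_strong_support V")
    case True
    then show ?thesis
      using code_dom_bound_strong_support[OF fin adm IH] unfolding has_strong_support_def by blast
  next
    case no_strong: False
    show ?thesis
      using fin acy adm no_strong False
    proof (cases rule: reducible_configuration)
      case two_pendant_P2
      then show ?thesis using code_dom_bound_two_pendant_P2[OF fin adm IH] by blast
    next
      case pendant_P3
      then show ?thesis using code_dom_bound_pendant_P3[OF fin adm IH] by blast
    next
      case leaf_and_pendant_P2
      then show ?thesis using code_dom_bound_leaf_and_pendant_P2[OF fin adm IH] by blast
    qed
  qed
qed

lemma code_dom_bound_if_admissible:
  "finite V \<Longrightarrow> acyclic_graph V E \<Longrightarrow> admissible V \<Longrightarrow> code_dom_bound V"
proof (induction "card V" arbitrary: V rule: less_induct)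
  case less
  show ?case
  proof (rule code_dom_bound_step[OF less.prems])
    fix W assume W: "W \<subset> V" "admissible W"
    then show "code_dom_bound W"
      using less.hyps[of W] less.prems psubset_card_mono[of V W] finite_subset[of W V]
        acyclic_graph_subset[of V W] by blast
  qed
qed

section \<open>Trees\<close>

lemma connected_nbhd_closed:
  assumes sg: "simple_graph V E" and conn: "connected_graph V E"
    and "x \<in> X" "X \<subseteq> V" and closed: "\<forall>u\<in>X. nbhd V u \<subseteq> X"
  shows "X = V"
proof
  show "V \<subseteq> X"
  proof
    fix y assume "y \<in> V"
    then have "E\<^sup>*\<^sup>* x y" using conn \<open>x \<in> X\<close> \<open>X \<subseteq> V\<close> unfolding connected_graph_def by blast
    then show "y \<in> X"
    proof (induction rule: rtranclp_induct)
      case (step a b)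
      then show ?case using closed sg unfolding simple_graph_def nbhd_def by blast
    qed (rule \<open>x \<in> X\<close>)
  qed
qed (rule \<open>X \<subseteq> V\<close>)

lemma graph_iso_path4:
  assumes V: "V = {a,b,c,d}" and dist: "distinct [a,b,c,d]"
    and n: "nbhd V a = {b}" "nbhd V b = {a,c}" "nbhd V c = {b,d}" "nbhd V d = {c}"
  shows "graph_iso V E (path_vertices 4) (path_edges 4)"
  unfolding graph_iso_def
proof (intro exI conjI)
  define f where "f x = (if x = a then 0 else if x = b then 1 else if x = c then 2 else (3::nat))" for x
  have "f ` V = {0..<4}"
    using dist unfolding V f_def by (auto simp: image_iff)
  then show "bij_betw f V (path_vertices 4)"
    using dist unfolding bij_betw_def path_vertices_def V inj_on_def f_def by auto
  have "E x y \<longleftrightarrow> y \<in> nbhd V x" if "x \<in> V" "y \<in> V" for x y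
    using that by (simp add: nbhd_def)
  then show "\<forall>u\<in>V. \<forall>v\<in>V. E u v \<longleftrightarrow> path_edges 4 (f u) (f v)"
    using dist unfolding V by (simp add: n[unfolded V] f_def path_edges_def) blast
qed

lemma tree_admissible:
  assumes tree: "is_tree V E" and three: "card V \<ge> 3"
    and not_P4: "\<not> graph_iso V E (path_vertices 4) (path_edges 4)"
  shows "admissible V"
proof -
  have sg: "simple_graph V E" and conn: "connected_graph V E"
    using tree unfolding is_tree_def by auto
  note closed = connected_nbhd_closed[OF sg conn]
  show ?thesis
    unfolding admissible_def
  proof (intro conjI ballI notI)
    fix x assume x: "x \<in> V" and "nbhd V x = {}"
    then have "V = {x}" using closed[of x "{x}"] by auto
    then show False using three by simp
  next
    assume "\<exists>u\<in>V. \<exists>v. nbhd V u = {v} \<and> nbhd V v = {u}"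
    then obtain u v where u: "u \<in> V" and uv: "nbhd V u = {v}" "nbhd V v = {u}" by blast
    then have "V = {u, v}" using closed[of u "{u,v}"] nbhd_eq_subset[OF uv(1)] by auto
    then show False using three by (simp add: card_insert_if split: if_splits)
  next
    assume "\<exists>a\<in>V. \<exists>b c d. distinct [a,b,c,d] \<and>
      nbhd V a = {b} \<and> nbhd V b = {a,c} \<and> nbhd V c = {b,d} \<and> nbhd V d = {c}"
    then obtain a b c d where a: "a \<in> V" and dist: "distinct [a,b,c,d]"
      and n: "nbhd V a = {b}" "nbhd V b = {a,c}" "nbhd V c = {b,d}" "nbhd V d = {c}" by blast
    have "V = {a,b,c,d}"
      using closed[of a "{a,b,c,d}"] a n nbhd_eq_subset[OF n(2)] nbhd_eq_subset[OF n(3)] by auto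
    then show False using graph_iso_path4[OF _ dist n] not_P4 by blast
  qed
qed

lemma id_code_number_le_if_code_dom_bound:
  assumes fin: "finite V" and bound: "code_dom_bound V"
  shows "id_code_number V E \<le> enat (card V - domination_number V E)"
proof -
  obtain C D where C: "identifying_code V E C" and D: "dominating_set V E D"
    and cd: "card C + card D \<le> card V"
    using bound unfolding code_dom_bound_def by blast
  have "id_code_number V E \<le> enat (card C)"
    unfolding id_code_number_def using C by (auto intro: INF_lower)
  moreover have "finite (card ` {D. dominating_set V E D})"
    using fin by (auto simp: dominating_set_def)
  then have "domination_number V E \<le> card D"
    unfolding domination_number_def using D by (auto intro: Min_le)
  ultimately show ?thesis using cd by (simp add: order_trans)
qed

end

theorem mainTheorem2:
  fixes V :: "'a set" and E :: "'a \<Rightarrow> 'a \<Rightarrow> bool"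
  assumes "is_tree V E"
    and "card V \<ge> 3"
    and "\<not> graph_iso V E (path_vertices 4) (path_edges 4)"
  shows "id_code_number V E \<le> enat (card V - domination_number V E)"
proof -
  have sg: "simple_graph V E" and acy: "acyclic_graph V E"
    using assms(1) unfolding is_tree_def by auto
  then have fin: "finite V" unfolding simple_graph_def by blast
  interpret adj_graph E
    by unfold_locales (use sg in \<open>auto simp: simple_graph_def\<close>)
  have "admissible V" using tree_admissible[OF assms] .
  then show ?thesis
    using id_code_number_le_if_code_dom_bound[OF fin] code_dom_bound_if_admissible[OF fin acy] by blast
qed

end
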